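(* Under the hypotheses and notation of the mass scaling of Olovsson et al. (element matrices $\overline{M}_e=I_3\otimes\bigl(\frac{m_e}{8}I_8+\frac{\beta m_e}{56}(8I_8-\mathbf{e}\mathbf{e}^T)\bigr)$, $\beta\ge0$, $m_e>0$, assembled as $\overline{M}=\sum_eL_e^T\overline{M}_eL_e$), one has $$\kappa(\overline{M})\le p_{\max}\Bigl(1+\tfrac{8}{7}\beta\Bigr)\frac{\max_e m_e}{\min_e m_e},$$ where $p_{\max}$ is the maximum, over global degrees of freedom $i$, of the number of elements $e$ whose index set $\{i_1,\dots,i_m\}$ contains $i$.
   Context: Finite element setting: $n$ global degrees of freedom, $N$ elements, $m=24$ local degrees of freedom per element; for each element $e$, $L_e\in\mathbb{R}^{m\times n}$ satisfies $L_e^T=[\mathbf{e}_{i_1},\dots,\mathbf{e}_{i_m}]$ for distinct indices (columns of $I_n$), and every global index appears for at least one element. $\mathbf{e}\in\mathbb{R}^8$ is the all-ones vector, $\otimes$ the Kronecker product, and $\kappa(A)=\lambda_{\max}(A)/\lambda_{\min}(A)$ for symmetric positive definite $A$. *)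

theory Defs
  imports "HOL-Analysis.Analysis"
begin

(* Square matrices with natural-number indices (0-based). *)
definition ident :: "nat \<Rightarrow> nat \<Rightarrow> real" where
  "ident i j = (if i = j then 1 else 0)"

definition ones :: "nat \<Rightarrow> nat \<Rightarrow> real" where
  "ones i j = 1"

definition kron :: "nat \<Rightarrow> (nat \<Rightarrow> nat \<Rightarrow> real) \<Rightarrow> (nat \<Rightarrow> nat \<Rightarrow> real) \<Rightarrow> nat \<Rightarrow> nat \<Rightarrow> real" where
  "kron p A B i j = A (i div p) (j div p) * B (i mod p) (j mod p)"

definition Mbar_elem :: "real \<Rightarrow> real \<Rightarrow> nat \<Rightarrow> nat \<Rightarrow> real" where
  "Mbar_elem \<beta> m = kron 8 ident
     (\<lambda>i j. m / 8 * ident i j + \<beta> * m / 56 * (8 * ident i j - ones i j))"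

(* Boolean (gather) matrix L_e: rows = local dofs k < 24, columns = global dofs *)
definition Lmat :: "('e \<Rightarrow> nat \<Rightarrow> 'n) \<Rightarrow> 'e \<Rightarrow> nat \<Rightarrow> 'n \<Rightarrow> real" where
  "Lmat idx e k i = (if idx e k = i then 1 else 0)"

definition assemble :: "('e::finite \<Rightarrow> nat \<Rightarrow> 'n::finite) \<Rightarrow> real \<Rightarrow> ('e \<Rightarrow> real) \<Rightarrow> real^'n^'n" where
  "assemble idx \<beta> m = (\<chi> i j. \<Sum>e\<in>UNIV. \<Sum>k<24. \<Sum>l<24.
      Lmat idx e k i * Mbar_elem \<beta> (m e) k l * Lmat idx e l j)"

definition eigenvalues :: "real^'n^'n \<Rightarrow> real set" where
  "eigenvalues A = {c. \<exists>v. v \<noteq> 0 \<and> A *v v = c *\<^sub>R v}"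

definition cond_num :: "real^'n^'n \<Rightarrow> real" where
  "cond_num A = Max (eigenvalues A) / Min (eigenvalues A)"

definition pmax :: "('e::finite \<Rightarrow> nat \<Rightarrow> 'n::finite) \<Rightarrow> nat" where
  "pmax idx = Max (range (\<lambda>i. card {e. i \<in> idx e ` {..<24}}))"

end

theory Submission
  imports Defs
begin

(* For a symmetric matrix every eigenvalue lies between any constants lo > 0 and hi with
   lo |x|^2 \<le> x^T A x \<le> hi |x|^2, so the condition number is at most hi / lo. The assembled
   quadratic form is the sum over elements of the element forms evaluated at the gathered local
   vectors. Each element matrix is block diagonal with three copies of
   (m/8 + \<beta> m/7) I - (\<beta> m/56) e e^T, and 0 \<le> e e^T \<le> 8 I, so the element form lies between
   m/8 and (m/8)(1 + 8\<beta>/7) times the local squared norm. Summing local squared norms over all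
   elements counts every global degree of freedom at least once and at most p_max times. *)

lemma inner_matrix_vector_symmetric:
  fixes A :: "real^'n^'n"
  assumes "transpose A = A"
  shows "x \<bullet> (A *v y) = (A *v x) \<bullet> y"
  by (metis assms dot_lmul_matrix transpose_matrix_vector)

lemma linear_coeff_zero_if_quadratic_nonneg:
  fixes a c :: real
  assumes "c \<ge> 0" and "\<And>t. 0 \<le> t * a + t\<^sup>2 * c"
  shows "a = 0"
proof (rule ccontr)
  assume "a \<noteq> 0"
  define t where "t = - a / (c + 1)"
  have "t * (c + 1) = - a" using assms(1) by (simp add: t_def)
  have "(t * a + t\<^sup>2 * c) * (c + 1)\<^sup>2 = (t * (c + 1)) * a * (c + 1) + (t * (c + 1))\<^sup>2 * c"
    by (simp add: power2_eq_square algebra_simps)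
  also have "\<dots> = - a\<^sup>2"
    unfolding \<open>t * (c + 1) = - a\<close> by (simp add: power2_eq_square algebra_simps)
  finally have "(t * a + t\<^sup>2 * c) * (c + 1)\<^sup>2 = - a\<^sup>2" .
  moreover have "0 \<le> (t * a + t\<^sup>2 * c) * (c + 1)\<^sup>2"
    using assms(2)[of t] by simp
  ultimately show False using \<open>a \<noteq> 0\<close> by simp
qed

(* If the Rayleigh quotient is maximal at v, moving v along its residual
   w = c v - A v cannot increase it; the first-order term of that perturbation is 2 |w|^2. *)

lemma rayleigh_maximizer_eigenvector:
  fixes A :: "real^'n^'n"
  assumes sym: "transpose A = A"
    and le: "\<And>x. x \<bullet> (A *v x) \<le> c * (x \<bullet> x)"
    and eq: "v \<bullet> (A *v v) = c * (v \<bullet> v)"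
  shows "A *v v = c *\<^sub>R v"
proof -
  define w where "w = c *\<^sub>R v - A *v v"
  define g where "g x = c * (x \<bullet> x) - x \<bullet> (A *v x)" for x
  have g_nonneg: "g x \<ge> 0" for x
    using le[of x] by (simp add: g_def)
  have "g (v + t *\<^sub>R w) = t * (2 * (w \<bullet> w)) + t\<^sup>2 * g w" for t
  proof -
    have "v \<bullet> (A *v w) = w \<bullet> (A *v v)"
      using inner_matrix_vector_symmetric[OF sym, of v w] by (simp add: inner_commute)
    moreover have "w \<bullet> w = c * (v \<bullet> w) - w \<bullet> (A *v v)"
      by (metis w_def inner_diff_right inner_scaleR_right inner_commute)
    moreover have "g (v + t *\<^sub>R w) = g v + t * (c * (v \<bullet> w) - v \<bullet> (A *v w))
        + t * (c * (v \<bullet> w) - w \<bullet> (A *v v)) + t\<^sup>2 * g w"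
      by (simp add: g_def matrix_vector_right_distrib matrix_vector_mult_scaleR
          inner_add_left inner_add_right inner_commute algebra_simps power2_eq_square)
    ultimately show ?thesis
      using eq by (simp add: g_def)
  qed
  then have "2 * (w \<bullet> w) = 0"
    using linear_coeff_zero_if_quadratic_nonneg g_nonneg by metis
  then show ?thesis by (simp add: w_def)
qed

lemma symmetric_eigenvalues_nonempty:
  fixes A :: "real^'n^'n"
  assumes sym: "transpose A = A"
  shows "eigenvalues A \<noteq> {}"
proof -
  let ?q = "\<lambda>x::real^'n. x \<bullet> (A *v x)"
  have "axis undefined 1 \<in> sphere (0::real^'n) 1" by simp
  then have "sphere (0::real^'n) 1 \<noteq> {}" by blast
  moreover have "continuous_on (sphere 0 1) ?q"
    by (intro continuous_intros matrix_vector_mult_linear_continuous_on)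
  ultimately obtain v where v: "v \<in> sphere 0 1" and v_max: "\<And>y. y \<in> sphere 0 1 \<Longrightarrow> ?q y \<le> ?q v"
    using continuous_attains_sup[OF compact_sphere] by blast
  have "v \<bullet> v = 1" using v by (simp add: dot_square_norm)
  have "?q x \<le> ?q v * (x \<bullet> x)" for x
  proof (cases "x = 0")
    case False
    define u where "u = (1 / norm x) *\<^sub>R x"
    have "x = norm x *\<^sub>R u" and "u \<in> sphere 0 1" using False by (simp_all add: u_def)
    then have "?q x = (norm x)\<^sup>2 * ?q u"
      by (metis inner_scaleR_left inner_scaleR_right matrix_vector_mult_scaleR power2_eq_square
          mult.assoc)
    also have "\<dots> \<le> (norm x)\<^sup>2 * ?q v"
      using v_max[OF \<open>u \<in> sphere 0 1\<close>] by (rule mult_left_mono) simp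
    finally show ?thesis by (simp add: power2_norm_eq_inner mult.commute)
  qed simp
  then have "A *v v = ?q v *\<^sub>R v"
    by (rule rayleigh_maximizer_eigenvector[OF sym]) (simp add: \<open>v \<bullet> v = 1\<close>)
  moreover have "v \<noteq> 0" using v by auto
  ultimately show ?thesis unfolding eigenvalues_def by blast
qed

(* Eigenvectors for distinct eigenvalues are orthogonal, so choosing one per eigenvalue
   gives an independent family. *)

lemma symmetric_eigenvalues_finite:
  fixes A :: "real^'n^'n"
  assumes sym: "transpose A = A"
  shows "finite (eigenvalues A)"
proof -
  define f where "f c = (SOME v. v \<noteq> 0 \<and> A *v v = c *\<^sub>R v)" for c
  have f: "f c \<noteq> 0 \<and> A *v f c = c *\<^sub>R f c" if "c \<in> eigenvalues A" for c
    unfolding f_def by (rule someI_ex) (use that in \<open>simp add: eigenvalues_def\<close>)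
  have orth: "f c \<bullet> f d = 0" if "c \<in> eigenvalues A" "d \<in> eigenvalues A" "c \<noteq> d" for c d
  proof -
    have "c * (f c \<bullet> f d) = (A *v f c) \<bullet> f d" using f[OF that(1)] by simp
    also have "\<dots> = f c \<bullet> (A *v f d)" using inner_matrix_vector_symmetric[OF sym] by simp
    also have "\<dots> = d * (f c \<bullet> f d)" using f[OF that(2)] by simp
    finally show ?thesis using that(3) by simp
  qed
  have "inj_on f (eigenvalues A)"
  proof (rule inj_onI, rule ccontr)
    fix c d assume "c \<in> eigenvalues A" "d \<in> eigenvalues A" "f c = f d" "c \<noteq> d"
    then show False using f orth by fastforce
  qed
  moreover have "independent (f ` eigenvalues A)"
    using f orth by (intro pairwise_orthogonal_independent) (auto simp: pairwise_def orthogonal_def)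
  then have "finite (f ` eigenvalues A)" using independent_bound by blast
  ultimately show ?thesis using finite_imageD by blast
qed

lemma cond_num_le_rayleigh_bounds:
  fixes A :: "real^'n^'n"
  assumes sym: "transpose A = A"
    and lower: "\<And>x. lo * (x \<bullet> x) \<le> x \<bullet> (A *v x)"
    and upper: "\<And>x. x \<bullet> (A *v x) \<le> hi * (x \<bullet> x)"
    and "lo > 0"
  shows "cond_num A \<le> hi / lo"
proof -
  have eigenvalue_bounds: "lo \<le> c \<and> c \<le> hi" if c: "c \<in> eigenvalues A" for c
  proof -
    obtain v where "v \<noteq> 0" and "A *v v = c *\<^sub>R v"
      using c by (auto simp: eigenvalues_def)
    then have q: "v \<bullet> (A *v v) = c * (v \<bullet> v)" and "v \<bullet> v > 0" by simp_all
    have "lo \<le> c"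
      using lower[of v] \<open>v \<bullet> v > 0\<close> unfolding q by (rule mult_right_le_imp_le)
    moreover have "c \<le> hi"
      using upper[of v] \<open>v \<bullet> v > 0\<close> unfolding q by (rule mult_right_le_imp_le)
    ultimately show ?thesis ..
  qed
  have fin: "finite (eigenvalues A)" and ne: "eigenvalues A \<noteq> {}"
    using symmetric_eigenvalues_finite[OF sym] symmetric_eigenvalues_nonempty[OF sym] by simp_all
  have "lo \<le> Max (eigenvalues A)" "Max (eigenvalues A) \<le> hi" "lo \<le> Min (eigenvalues A)"
    using eigenvalue_bounds[OF Max_in[OF fin ne]] eigenvalue_bounds[OF Min_in[OF fin ne]] by simp_all
  then show ?thesis
    unfolding cond_num_def using \<open>lo > 0\<close> by (intro frac_le) simp_all
qed

lemma sum_lessThan_mult_blocks: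
  fixes g :: "nat \<Rightarrow> 'a::comm_monoid_add"
  shows "(\<Sum>k<q*p. g k) = (\<Sum>b<q. \<Sum>i<p. g (b*p+i))"
proof -
  have "sum g {b*p..<b*p+p} = (\<Sum>i<p. g (b*p+i))" for b
  proof -
    have "{b*p..<b*p+p} = (+) (b*p) ` {..<p}" by (simp add: lessThan_atLeast0 add.commute)
    then show ?thesis by (simp add: sum.reindex)
  qed
  then show ?thesis
    using sum.nat_group[of g p q] by (simp add: mult.commute)
qed

lemma quadratic_form_kron_ident:
  fixes y :: "nat \<Rightarrow> real"
  shows "(\<Sum>k<q*p. \<Sum>l<q*p. y k * kron p ident B k l * y l)
       = (\<Sum>b<q. \<Sum>i<p. \<Sum>j<p. y (b*p+i) * B i j * y (b*p+j))"
proof -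
  have entry: "kron p ident B (b*p+i) (c*p+j) = (if c = b then B i j else 0)"
    if "i < p" "j < p" for b c i j
    using that by (simp add: kron_def ident_def)
  have "(\<Sum>k<q*p. \<Sum>l<q*p. y k * kron p ident B k l * y l)
      = (\<Sum>b<q. \<Sum>i<p. \<Sum>c<q. \<Sum>j<p. (if c = b then y (b*p+i) * B i j * y (b*p+j) else 0))"
    unfolding sum_lessThan_mult_blocks by (intro sum.cong refl) (simp add: entry)
  also have "\<dots> = (\<Sum>b<q. \<Sum>i<p. \<Sum>j<p. y (b*p+i) * B i j * y (b*p+j))"
    by (simp add: sum.swap[where A="{..<q}"] sum.delta)
  finally show ?thesis .
qed

lemma sum_ident_left:
  assumes "finite A" "i \<in> A"
  shows "(\<Sum>j\<in>A. ident i j * f j) = (f i :: real)"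
proof -
  have "(\<Sum>j\<in>A. ident i j * f j) = (\<Sum>j\<in>A. if i = j then f j else 0)"
    by (rule sum.cong) (simp_all add: ident_def)
  then show ?thesis using assms by simp
qed

lemma quadratic_form_ident_minus_ones:
  fixes z :: "nat \<Rightarrow> real"
  shows "(\<Sum>i<n. \<Sum>j<n. z i * (a * ident i j - d * ones i j) * z j)
       = a * (\<Sum>i<n. (z i)\<^sup>2) - d * (\<Sum>i<n. z i)\<^sup>2"
proof -
  have "(\<Sum>j<n. z i * (a * ident i j - d * ones i j) * z j) = a * (z i)\<^sup>2 - d * z i * (\<Sum>j<n. z j)"
    if "i < n" for i
  proof -
    have "(\<Sum>j<n. z i * (a * ident i j - d * ones i j) * z j)
        = (\<Sum>j<n. ident i j * (a * z i * z j)) - (\<Sum>j<n. d * z i * z j)"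
      by (simp add: ones_def algebra_simps sum_subtractf)
    then show ?thesis
      using that by (simp add: sum_ident_left sum_distrib_left power2_eq_square)
  qed
  then show ?thesis
    by (simp add: sum_subtractf sum_distrib_left sum_distrib_right power2_eq_square mult_ac)
qed

lemma quadratic_form_ident_minus_ones_bounds:
  fixes z :: "nat \<Rightarrow> real"
  assumes "d \<ge> 0"
  shows "(a - n * d) * (\<Sum>i<n. (z i)\<^sup>2) \<le> (\<Sum>i<n. \<Sum>j<n. z i * (a * ident i j - d * ones i j) * z j)"
    and "(\<Sum>i<n. \<Sum>j<n. z i * (a * ident i j - d * ones i j) * z j) \<le> a * (\<Sum>i<n. (z i)\<^sup>2)"
proof -
  have "(\<Sum>i<n. z i)\<^sup>2 \<le> n * (\<Sum>i<n. (z i)\<^sup>2)"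
    using sum_squared_le_sum_of_squares[of z "{..<n}"] by (simp add: mult.commute)
  then have "d * (\<Sum>i<n. z i)\<^sup>2 \<le> d * (n * (\<Sum>i<n. (z i)\<^sup>2))"
    using assms by (rule mult_left_mono)
  then show "(a - n * d) * (\<Sum>i<n. (z i)\<^sup>2) \<le> (\<Sum>i<n. \<Sum>j<n. z i * (a * ident i j - d * ones i j) * z j)"
    unfolding quadratic_form_ident_minus_ones by (simp add: algebra_simps)
  show "(\<Sum>i<n. \<Sum>j<n. z i * (a * ident i j - d * ones i j) * z j) \<le> a * (\<Sum>i<n. (z i)\<^sup>2)"
    unfolding quadratic_form_ident_minus_ones using assms by simp
qed

lemma Mbar_elem_kron_form:
  "Mbar_elem \<beta> m = kron 8 ident (\<lambda>i j. (m/8 + \<beta>*m/7) * ident i j - \<beta>*m/56 * ones i j)"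
  unfolding Mbar_elem_def by (rule arg_cong[where f="kron 8 ident"]) (simp add: fun_eq_iff algebra_simps)

lemma Mbar_elem_quadratic_form_bounds:
  fixes y :: "nat \<Rightarrow> real"
  assumes "\<beta> \<ge> 0" "m \<ge> 0"
  shows "m/8 * (\<Sum>k<24. (y k)\<^sup>2) \<le> (\<Sum>k<24. \<Sum>l<24. y k * Mbar_elem \<beta> m k l * y l)"
    and "(\<Sum>k<24. \<Sum>l<24. y k * Mbar_elem \<beta> m k l * y l) \<le> m/8 * (1 + 8/7*\<beta>) * (\<Sum>k<24. (y k)\<^sup>2)"
proof -
  let ?a = "m/8 + \<beta>*m/7" and ?d = "\<beta>*m/56"
  let ?Q = "\<lambda>b. \<Sum>i<8. \<Sum>j<8. y (b*8+i) * (?a * ident i j - ?d * ones i j) * y (b*8+j)"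
  let ?S = "\<lambda>b. \<Sum>i<8. (y (b*8+i))\<^sup>2"
  have Q: "(\<Sum>k<24. \<Sum>l<24. y k * Mbar_elem \<beta> m k l * y l) = (\<Sum>b<3. ?Q b)"
    using quadratic_form_kron_ident[where q = 3 and p = 8] by (simp add: Mbar_elem_kron_form)
  have S: "(\<Sum>k<24. (y k)\<^sup>2) = (\<Sum>b<3. ?S b)"
    using sum_lessThan_mult_blocks[where q = 3 and p = 8] by simp
  have "?d \<ge> 0" using assms by simp
  note block = quadratic_form_ident_minus_ones_bounds[OF this, where a = ?a and n = 8]
  have "m/8 * ?S b \<le> ?Q b" and "?Q b \<le> m/8 * (1 + 8/7*\<beta>) * ?S b" for b
    using block[of "\<lambda>i. y (b*8+i)"] by (simp_all add: algebra_simps)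
  then show "m/8 * (\<Sum>k<24. (y k)\<^sup>2) \<le> (\<Sum>k<24. \<Sum>l<24. y k * Mbar_elem \<beta> m k l * y l)"
    and "(\<Sum>k<24. \<Sum>l<24. y k * Mbar_elem \<beta> m k l * y l) \<le> m/8 * (1 + 8/7*\<beta>) * (\<Sum>k<24. (y k)\<^sup>2)"
    unfolding Q S sum_distrib_left[of _ ?S] by (simp_all add: sum_mono)
qed

lemma Lmat_gather:
  fixes x :: "'n::finite \<Rightarrow> real"
  shows "(\<Sum>i\<in>UNIV. x i * Lmat idx e k i) = x (idx e k)"
proof -
  have "(\<Sum>i\<in>UNIV. x i * Lmat idx e k i) = (\<Sum>i\<in>UNIV. if idx e k = i then x i else 0)"
    by (rule sum.cong) (simp_all add: Lmat_def)
  then show ?thesis by simp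
qed

lemma sum_bilinear_reorder:
  fixes x y :: "'i \<Rightarrow> real"
  shows "(\<Sum>i\<in>I. \<Sum>j\<in>J. x i * (\<Sum>k\<in>K. \<Sum>l\<in>L. u k i * M k l * v l j) * y j)
       = (\<Sum>k\<in>K. \<Sum>l\<in>L. (\<Sum>i\<in>I. x i * u k i) * M k l * (\<Sum>j\<in>J. y j * v l j))"
proof -
  have "(\<Sum>i\<in>I. \<Sum>j\<in>J. x i * (\<Sum>k\<in>K. \<Sum>l\<in>L. u k i * M k l * v l j) * y j)
      = (\<Sum>i\<in>I. \<Sum>j\<in>J. \<Sum>k\<in>K. \<Sum>l\<in>L. (x i * u k i) * M k l * (y j * v l j))"
    by (simp add: sum_distrib_left sum_distrib_right mult_ac)
  also have "\<dots> = (\<Sum>i\<in>I. \<Sum>k\<in>K. \<Sum>j\<in>J. \<Sum>l\<in>L. (x i * u k i) * M k l * (y j * v l j))"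
    by (rule sum.cong[OF refl], rule sum.swap)
  also have "\<dots> = (\<Sum>k\<in>K. \<Sum>i\<in>I. \<Sum>l\<in>L. \<Sum>j\<in>J. (x i * u k i) * M k l * (y j * v l j))"
    by (subst sum.swap) (rule sum.cong[OF refl], rule sum.cong[OF refl], rule sum.swap)
  also have "\<dots> = (\<Sum>k\<in>K. \<Sum>l\<in>L. \<Sum>i\<in>I. \<Sum>j\<in>J. (x i * u k i) * M k l * (y j * v l j))"
    by (rule sum.cong[OF refl], rule sum.swap)
  also have "\<dots> = (\<Sum>k\<in>K. \<Sum>l\<in>L. (\<Sum>i\<in>I. x i * u k i) * M k l * (\<Sum>j\<in>J. y j * v l j))"
    by (simp only: sum_distrib_right) (simp only: sum_distrib_left)
  finally show ?thesis .
qed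

lemma quadratic_form_assemble:
  fixes idx :: "'e::finite \<Rightarrow> nat \<Rightarrow> 'n::finite"
  shows "x \<bullet> (assemble idx \<beta> m *v x)
       = (\<Sum>e\<in>UNIV. \<Sum>k<24. \<Sum>l<24. x $ idx e k * Mbar_elem \<beta> (m e) k l * x $ idx e l)"
proof -
  let ?L = "Lmat idx"
  let ?F = "\<lambda>e i j. \<Sum>k<24. \<Sum>l<24. ?L e k i * Mbar_elem \<beta> (m e) k l * ?L e l j"
  have "x \<bullet> (assemble idx \<beta> m *v x) = (\<Sum>i\<in>UNIV. \<Sum>j\<in>UNIV. x $ i * (\<Sum>e\<in>UNIV. ?F e i j) * x $ j)"
    by (simp add: inner_vec_def matrix_vector_mult_def assemble_def sum_distrib_left
        sum_distrib_right mult_ac)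
  also have "\<dots> = (\<Sum>i\<in>UNIV. \<Sum>j\<in>UNIV. \<Sum>e\<in>UNIV. x $ i * ?F e i j * x $ j)"
    by (simp only: sum_distrib_left sum_distrib_right)
  also have "\<dots> = (\<Sum>e\<in>UNIV. \<Sum>i\<in>UNIV. \<Sum>j\<in>UNIV. x $ i * ?F e i j * x $ j)"
    by (subst sum.swap) (rule sum.cong[OF refl], rule sum.swap)
  also have "\<dots> = (\<Sum>e\<in>UNIV. \<Sum>k<24. \<Sum>l<24. x $ idx e k * Mbar_elem \<beta> (m e) k l * x $ idx e l)"
    by (simp only: sum_bilinear_reorder Lmat_gather)
  finally show ?thesis .
qed

lemma assemble_symmetric: "transpose (assemble idx \<beta> m) = assemble idx \<beta> m"
proof -
  have Mbar_elem_sym: "Mbar_elem \<beta> (m e) k l = Mbar_elem \<beta> (m e) l k" for e k l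
    by (simp add: Mbar_elem_def kron_def ident_def ones_def eq_commute)
  have "(\<Sum>k<24. \<Sum>l<24. Lmat idx e k j * Mbar_elem \<beta> (m e) k l * Lmat idx e l i)
      = (\<Sum>k<24. \<Sum>l<24. Lmat idx e k i * Mbar_elem \<beta> (m e) k l * Lmat idx e l j)" for e i j
    by (subst sum.swap) (simp add: Mbar_elem_sym mult_ac)
  then show ?thesis
    by (simp add: vec_eq_iff transpose_def assemble_def)
qed

lemma sum_local_dofs_multiplicity:
  fixes idx :: "'e::finite \<Rightarrow> 'k \<Rightarrow> 'n::finite" and g :: "'n \<Rightarrow> real"
  assumes "\<And>e. inj_on (idx e) K"
  shows "(\<Sum>e\<in>UNIV. \<Sum>k\<in>K. g (idx e k)) = (\<Sum>i\<in>UNIV. g i * real (card {e. i \<in> idx e ` K}))"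
proof -
  have "(\<Sum>k\<in>K. g (idx e k)) = (\<Sum>i\<in>UNIV. if i \<in> idx e ` K then g i else 0)" for e
    using sum.reindex[OF assms, of g] sum.inter_restrict[of UNIV g "idx e ` K"] by simp
  then have "(\<Sum>e\<in>UNIV. \<Sum>k\<in>K. g (idx e k)) = (\<Sum>e\<in>UNIV. \<Sum>i\<in>UNIV. if i \<in> idx e ` K then g i else 0)"
    by simp
  also have "\<dots> = (\<Sum>i\<in>UNIV. \<Sum>e\<in>UNIV. if i \<in> idx e ` K then g i else 0)"
    by (rule sum.swap)
  also have "\<dots> = (\<Sum>i\<in>UNIV. g i * real (card {e. i \<in> idx e ` K}))"
    by (simp add: sum.If_cases mult.commute)
  finally show ?thesis .
qed

lemma assemble_quadratic_form_lower:
  fixes idx :: "'e::finite \<Rightarrow> nat \<Rightarrow> 'n::finite"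
  assumes distinct: "\<And>e. inj_on (idx e) {..<24}"
    and cover: "\<And>i. \<exists>e. i \<in> idx e ` {..<24}"
    and "\<beta> \<ge> 0" and m_nonneg: "\<And>e. m e \<ge> 0"
  shows "Min (range m) / 8 * (x \<bullet> x) \<le> x \<bullet> (assemble idx \<beta> m *v x)"
proof -
  let ?S = "\<lambda>e. \<Sum>k<24. (x $ idx e k)\<^sup>2"
  have "0 \<le> Min (range m)" using m_nonneg by simp
  have "1 \<le> card {e. i \<in> idx e ` {..<24}}" for i
    using cover[of i] by (simp add: Suc_le_eq card_gt_0_iff)
  then have "x \<bullet> x \<le> (\<Sum>i\<in>UNIV. (x $ i)\<^sup>2 * real (card {e. i \<in> idx e ` {..<24}}))"
    unfolding inner_vec_def power2_eq_square by (intro sum_mono) (simp add: mult_le_cancel_left1)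
  also have "\<dots> = (\<Sum>e\<in>UNIV. ?S e)"
    using sum_local_dofs_multiplicity[where idx = idx and K = "{..<24}", OF distinct, of "\<lambda>i. (x $ i)\<^sup>2"] by simp
  finally have "Min (range m) / 8 * (x \<bullet> x) \<le> Min (range m) / 8 * (\<Sum>e\<in>UNIV. ?S e)"
    using \<open>0 \<le> Min (range m)\<close> by (simp add: mult_left_mono)
  also have "\<dots> = (\<Sum>e\<in>UNIV. Min (range m) / 8 * ?S e)"
    by (rule sum_distrib_left)
  also have "\<dots> \<le> (\<Sum>e\<in>UNIV. m e / 8 * ?S e)"
    by (intro sum_mono mult_right_mono) (simp_all add: sum_nonneg)
  also have "\<dots> \<le> x \<bullet> (assemble idx \<beta> m *v x)"
    unfolding quadratic_form_assemble
    by (intro sum_mono Mbar_elem_quadratic_form_bounds(1) \<open>\<beta> \<ge> 0\<close> m_nonneg)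
  finally show ?thesis .
qed

lemma assemble_quadratic_form_upper:
  fixes idx :: "'e::finite \<Rightarrow> nat \<Rightarrow> 'n::finite"
  assumes distinct: "\<And>e. inj_on (idx e) {..<24}"
    and "\<beta> \<ge> 0" and m_nonneg: "\<And>e. m e \<ge> 0"
  shows "x \<bullet> (assemble idx \<beta> m *v x)
       \<le> real (pmax idx) * (1 + 8/7*\<beta>) * (Max (range m) / 8) * (x \<bullet> x)"
proof -
  let ?S = "\<lambda>e. \<Sum>k<24. (x $ idx e k)\<^sup>2"
  let ?c = "(1 + 8/7*\<beta>) * (Max (range m) / 8)"
  have "0 \<le> Max (range m)" using m_nonneg by (simp add: Max_ge_iff)
  then have "0 \<le> ?c" using \<open>\<beta> \<ge> 0\<close> by simp
  have "x \<bullet> (assemble idx \<beta> m *v x) \<le> (\<Sum>e\<in>UNIV. m e / 8 * (1 + 8/7*\<beta>) * ?S e)"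
    unfolding quadratic_form_assemble
    by (intro sum_mono Mbar_elem_quadratic_form_bounds(2) \<open>\<beta> \<ge> 0\<close> m_nonneg)
  also have "\<dots> \<le> (\<Sum>e\<in>UNIV. ?c * ?S e)"
    using \<open>\<beta> \<ge> 0\<close> by (intro sum_mono mult_right_mono) (simp_all add: sum_nonneg)
  also have "\<dots> = ?c * (\<Sum>i\<in>UNIV. (x $ i)\<^sup>2 * real (card {e. i \<in> idx e ` {..<24}}))"
    unfolding sum_distrib_left[symmetric]
    using sum_local_dofs_multiplicity[where idx = idx and K = "{..<24}", OF distinct, of "\<lambda>i. (x $ i)\<^sup>2"] by simp
  also have "\<dots> \<le> ?c * (\<Sum>i\<in>UNIV. (x $ i)\<^sup>2 * real (pmax idx))"
    unfolding pmax_def using \<open>0 \<le> ?c\<close> by (intro mult_left_mono sum_mono mult_left_mono) auto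
  also have "\<dots> = real (pmax idx) * (1 + 8/7*\<beta>) * (Max (range m) / 8) * (x \<bullet> x)"
    by (simp add: inner_vec_def power2_eq_square sum_distrib_left sum_distrib_right mult_ac)
  finally show ?thesis .
qed

theorem mainTheorem9:
  fixes idx :: "'e::finite \<Rightarrow> nat \<Rightarrow> 'n::finite"
    and m :: "'e \<Rightarrow> real" and \<beta> :: real
  assumes distinct: "\<And>e. inj_on (idx e) {..<24}"
    and cover: "\<And>i. \<exists>e. i \<in> idx e ` {..<24}"
    and beta: "\<beta> \<ge> 0"
    and mpos: "\<And>e. m e > 0"
  shows "cond_num (assemble idx \<beta> m)
           \<le> real (pmax idx) * (1 + 8 / 7 * \<beta>) * (Max (range m) / Min (range m))"
proof -
  have m_nonneg: "m e \<ge> 0" for e using mpos[of e] by simp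
  have "Min (range m) > 0" using mpos by simp
  have "cond_num (assemble idx \<beta> m)
      \<le> real (pmax idx) * (1 + 8/7*\<beta>) * (Max (range m) / 8) / (Min (range m) / 8)"
    using \<open>Min (range m) > 0\<close>
    by (intro cond_num_le_rayleigh_bounds assemble_symmetric
        assemble_quadratic_form_lower[OF distinct cover beta m_nonneg]
        assemble_quadratic_form_upper[OF distinct beta m_nonneg]) simp
  then show ?thesis by simp
qed

end
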